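(* Let $X$ be a topological space, let $A \subseteq X$ be an open subset, and let $p : X \to X/A$ be the quotient map collapsing $A$ to a single point $* = p(A)$. Let $\overline{\{*\}}$ denote the closure of $\{*\}$ in $X/A$. Then every loop $\alpha : [0,1] \to X/A$ based at $*$ with $\alpha([0,1]) \subseteq \overline{\{*\}}$ is nullhomotopic relative to the endpoints.
   Context: For $A\subseteq X$, $X/A$ denotes the quotient space obtained from $X$ by identifying all points of $A$ to a single point, denoted $*$, and $p:X\to X/A$ is the quotient map. A loop based at $x$ is a continuous map $\alpha:[0,1]\to X$ with $\alpha(0)=\alpha(1)=x$; homotopies of loops are relative to the endpoints. *)

theory Defs
  imports "HOL-Analysis.Analysis"
begin

definition collapse :: "'a set \<Rightarrow> 'a \<Rightarrow> 'a set" where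
  "collapse A x = (if x \<in> A then A else {x})"

text \<open>The point * = A is
  always included (so X/{} is X with an added isolated point, the usual convention).\<close>
definition collapse_topology :: "'a topology \<Rightarrow> 'a set \<Rightarrow> 'a set topology" where
  "collapse_topology X A =
     topology (\<lambda>U. U \<subseteq> collapse A ` topspace X \<union> {A} \<and>
                  openin X {x \<in> topspace X. collapse A x \<in> U})"

end

theory Submission
  imports Defs
begin

text \<open>The hypothesis that the loop lies in the closure of the base point
  is the whole point: a path in the closure of a single point a is homotopic, rel
  endpoints, to the constant path at a by the "jump" homotopy which is the path at
  time 0 and constantly a at every positive time. This homotopy is continuous because
  any open set meeting the closure of {a} contains a itself, so the preimage of an open
  set is either empty or the union of an open box over the path's preimage with the
  open slab of positive times. The argument works for an arbitrary map into an
  arbitrary topological space; the theorem is the special case of a loop into the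
  collapsed space X/A based at the point A.\<close>

lemma closure_of_singleton_in_open:
  assumes "y \<in> Y closure_of {a}" and "openin Y U" and "y \<in> U"
  shows "a \<in> U"
  using assms by (auto simp: in_closure_of)

lemma continuous_map_jump_to_point:
  assumes f: "continuous_map Z Y f"
    and img: "f ` topspace Z \<subseteq> Y closure_of {a}"
    and a: "a \<in> topspace Y"
  shows "continuous_map (prod_topology (top_of_set {0..1}) Z) Y
           (\<lambda>(s::real, z). if s = 0 then f z else a)"
    (is "continuous_map ?T Y ?h")
  unfolding continuous_map_def
proof (intro conjI allI impI)
  show "?h \<in> topspace ?T \<rightarrow> topspace Y"
    using continuous_map_image_subset_topspace[OF f] a by auto
next
  fix U assume U: "openin Y U"
  show "openin ?T {p \<in> topspace ?T. ?h p \<in> U}"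
  proof (cases "a \<in> U")
    case True
    have "{p \<in> topspace ?T. ?h p \<in> U} =
            {0..1} \<times> {z \<in> topspace Z. f z \<in> U} \<union> ({0..1} \<inter> {0<..}) \<times> topspace Z"
      using True by (auto split: if_splits)
    moreover have "openin (top_of_set {0..1::real}) ({0..1} \<inter> {0<..})"
      by (rule openin_open_Int) auto
    ultimately show ?thesis
      using openin_continuous_map_preimage[OF f U]
      by (simp add: openin_Un openin_prod_Times_iff)
  next
    case False
    then have "{p \<in> topspace ?T. ?h p \<in> U} = {}"
      using img closure_of_singleton_in_open[OF _ U] by (fastforce split: if_splits)
    then show ?thesis by (metis openin_empty)
  qed
qed

lemma homotopic_with_const_closure_of_point:
  assumes "continuous_map Z Y f"
    and "f ` topspace Z \<subseteq> Y closure_of {a}"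
    and "a \<in> topspace Y"
    and "P f" and "P (\<lambda>z. a)"
  shows "homotopic_with P Z Y f (\<lambda>z. a)"
  unfolding homotopic_with_def
proof (intro exI conjI)
  show "continuous_map (prod_topology (top_of_set {0..1}) Z) Y
          (\<lambda>(s::real, z). if s = 0 then f z else a)"
    using continuous_map_jump_to_point assms(1-3) .
  have "(\<lambda>z. if t = 0 then f z else a) = (if t = 0 then f else (\<lambda>z. a))" for t :: real
    by auto
  then show "\<forall>t\<in>{0..1}. P (\<lambda>z. (\<lambda>(s::real, z). if s = 0 then f z else a) (t, z))"
    using assms(4,5) by simp
qed auto

theorem lemma3p1:
  fixes X :: "'a topology" and A :: "'a set" and \<alpha> :: "real \<Rightarrow> 'a set"
  assumes "openin X A"
    and "pathin (collapse_topology X A) \<alpha>"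
    and "\<alpha> 0 = A" and "\<alpha> 1 = A"
    and "\<alpha> ` {0..1} \<subseteq> (collapse_topology X A) closure_of {A}"
  shows "homotopic_with (\<lambda>h. h 0 = A \<and> h 1 = A) (top_of_set {0..1})
           (collapse_topology X A) \<alpha> (\<lambda>t. A)"
proof (rule homotopic_with_const_closure_of_point)
  show path: "continuous_map (top_of_set {0..1}) (collapse_topology X A) \<alpha>"
    using assms(2) by (simp add: pathin_def)
  show "\<alpha> ` topspace (top_of_set {0..1}) \<subseteq> collapse_topology X A closure_of {A}"
    using assms(5) by simp
  show "A \<in> topspace (collapse_topology X A)"
    using path_image_subset_topspace[OF assms(2)] assms(3) by force
qed (use assms(3,4) in auto)

end
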